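(* For each $s\ge1$ there is a constant $C>0$ depending on $s$ such that for every $\zeta\in C_c^\infty(U)$ and every sufficiently regular function $w$ on $U$ for which the right-hand side is well defined, $$\int_UK(|\nabla w|)|\nabla w|^{2s+2}\zeta^2dx\le C\sup_{\operatorname{supp}\zeta}|w|^2\Big\{\int_UK(|\nabla w|)|\nabla w|^{2s-2}|\nabla^2w|^2\zeta^2dx+\int_UK(|\nabla w|)|\nabla w|^{2s}|\nabla\zeta|^2dx\Big\}.$$
   Context: $U\subset\mathbb R^n$ ($n\ge2$) is a bounded open set. Fix $N\ge1$, real exponents $0=\alpha_0<\dots<\alpha_N$, coefficients $a_0,a_N>0$, $a_1,\dots,a_{N-1}\ge0$, $g(s)=\sum_j a_js^{\alpha_j}$; for $\xi\ge0$ let $s(\xi)\ge0$ solve $s g(s)=\xi$ and $K(\xi)=1/g(s(\xi))$. $\nabla^2 w$ is the Hessian of $w$. $C$ also depends on $n,U,g$. *)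

theory Defs
  imports "HOL-Analysis.Analysis"
begin

definition pw :: "real \<Rightarrow> real \<Rightarrow> real" where
  "pw t e = (if e = 0 then 1 else t powr e)"

definition gfun :: "nat \<Rightarrow> (nat \<Rightarrow> real) \<Rightarrow> (nat \<Rightarrow> real) \<Rightarrow> real \<Rightarrow> real" where
  "gfun N a \<alpha> t = (\<Sum>j\<le>N. a j * pw t (\<alpha> j))"

definition sol :: "nat \<Rightarrow> (nat \<Rightarrow> real) \<Rightarrow> (nat \<Rightarrow> real) \<Rightarrow> real \<Rightarrow> real" where
  "sol N a \<alpha> \<xi> = (THE t. t \<ge> 0 \<and> t * gfun N a \<alpha> t = \<xi>)"

definition Kfun :: "nat \<Rightarrow> (nat \<Rightarrow> real) \<Rightarrow> (nat \<Rightarrow> real) \<Rightarrow> real \<Rightarrow> real" where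
  "Kfun N a \<alpha> \<xi> = 1 / gfun N a \<alpha> (sol N a \<alpha> \<xi>)"

definition grad :: "(real^'n \<Rightarrow> real) \<Rightarrow> real^'n \<Rightarrow> real^'n" where
  "grad f x = (\<chi> i. frechet_derivative f (at x) (axis i 1))"

definition hess :: "(real^'n \<Rightarrow> real) \<Rightarrow> real^'n \<Rightarrow> real^'n^'n" where
  "hess f x = (\<chi> i. grad (\<lambda>y. grad f y $ i) x)"

fun Ck_on :: "nat \<Rightarrow> (real^'n) set \<Rightarrow> (real^'n \<Rightarrow> real) \<Rightarrow> bool" where
  "Ck_on 0 U f = continuous_on U f"
| "Ck_on (Suc k) U f = (f differentiable_on U \<and> (\<forall>i. Ck_on k U (\<lambda>x. grad f x $ i)))"

definition supp :: "(real^'n \<Rightarrow> real) \<Rightarrow> (real^'n) set" where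
  "supp f = closure {x. f x \<noteq> 0}"

definition test_fun :: "(real^'n) set \<Rightarrow> (real^'n \<Rightarrow> real) \<Rightarrow> bool" where
  "test_fun U f = ((\<forall>k. Ck_on k UNIV f) \<and> compact (supp f) \<and> supp f \<subseteq> U)"

end

theory Submission
  imports Defs
begin

(*
  Let rho(r) = K(r) r^(2s). The field w zeta^2 rho(|grad w|) grad w has compact support in U,
  so its divergence integrates to zero. The divergence is zeta^2 K |grad w|^(2s+2) plus terms
  carrying a factor w and either grad zeta or the Hessian of w; they are controlled because
  rho'(r) <= 2s K(r) r^(2s-1), which holds since the inverse function sol of t g(t) has
  derivative 1/(g + t g') <= 1/g = K. Young's inequality absorbs half of the main term and
  bounds the rest by sup |w|^2 times the two integrals on the right.
*)

section \<open>Integration on Euclidean space\<close>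

lemma integrable_lborel_translate:
  fixes f :: "'a::euclidean_space \<Rightarrow> real"
  assumes "integrable lborel f"
  shows "integrable lborel (\<lambda>x. f (x + c))"
proof -
  have "integrable (distr lborel borel ((+) c)) f"
    using assms by (simp add: lborel_distr_plus)
  then have "integrable lborel (\<lambda>x. f (c + x))"
    using assms by (subst (asm) integrable_distr_eq) auto
  then show ?thesis by (simp add: add.commute)
qed

lemma integral_lborel_translate:
  fixes f :: "'a::euclidean_space \<Rightarrow> real"
  assumes "f \<in> borel_measurable borel"
  shows "(\<integral>x. f (x + c) \<partial>lborel) = (\<integral>x. f x \<partial>lborel)"
proof -
  have "(\<integral>x. f (c + x) \<partial>lborel) = integral\<^sup>L (distr lborel borel ((+) c)) f"
    using assms by (intro integral_distr[symmetric]) auto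
  then show ?thesis by (simp add: lborel_distr_plus add.commute)
qed

lemma integrable_indicator_mult_continuous_on:
  fixes f :: "'a::euclidean_space \<Rightarrow> real"
  assumes "compact S" "S \<subseteq> U" "continuous_on U f" "\<And>x. x \<in> U \<Longrightarrow> x \<notin> S \<Longrightarrow> f x = 0"
  shows "integrable lborel (\<lambda>x. indicator U x * f x)"
proof -
  have "integrable lborel (\<lambda>x. indicator S x *\<^sub>R f x)"
    using assms continuous_on_subset[OF assms(3,2)] by (intro borel_integrable_compact) auto
  moreover have "(\<lambda>x. indicator S x *\<^sub>R f x) = (\<lambda>x. indicator U x * f x)"
    using assms by (auto simp: indicator_def fun_eq_iff)
  ultimately show ?thesis by simp
qed

lemma set_integral_lebesgue_eq_lborel:
  fixes f :: "'a::euclidean_space \<Rightarrow> real"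
  assumes "open U" "continuous_on U f"
  shows "(LINT x:U|lebesgue. f x) = (\<integral>x. indicator U x * f x \<partial>lborel)"
proof -
  have "(\<lambda>x. indicator U x * f x) \<in> borel_measurable borel"
    using borel_measurable_continuous_on_indicator[OF _ assms(2)] assms(1) by (simp add: borel_open)
  then show ?thesis
    by (simp add: set_lebesgue_integral_def integral_completion)
qed

lemma integral_le_by_absorption:
  fixes Q E R :: "'a \<Rightarrow> real"
  assumes "integrable M Q" "integrable M E" "integrable M R" "integral\<^sup>L M E = 0"
    and "\<And>x. \<bar>E x - Q x\<bar> \<le> Q x / 2 + R x"
  shows "integral\<^sup>L M Q \<le> 2 * integral\<^sup>L M R"
proof -
  have "Q x / 2 \<le> E x + R x" for x
    using assms(5)[of x] by (simp add: abs_le_iff)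
  then have "integral\<^sup>L M (\<lambda>x. Q x / 2) \<le> integral\<^sup>L M (\<lambda>x. E x + R x)"
    using assms(1-3) by (intro integral_mono) auto
  then show ?thesis
    using assms by simp
qed

lemma has_real_derivative_along_line:
  fixes f :: "'a::real_normed_vector \<Rightarrow> real"
  assumes "(f has_derivative D) (at (x + t *\<^sub>R e))"
  shows "((\<lambda>t. f (x + t *\<^sub>R e)) has_real_derivative D e) (at t)"
proof -
  have "((\<lambda>t. x + t *\<^sub>R e) has_derivative (\<lambda>u. u *\<^sub>R e)) (at t)"
    by (auto intro!: derivative_eq_intros)
  from has_derivative_compose[OF this assms]
  have "((\<lambda>t. f (x + t *\<^sub>R e)) has_derivative (\<lambda>u. D (u *\<^sub>R e))) (at t)" .
  moreover have "(\<lambda>u. D (u *\<^sub>R e)) = (*) (D e)"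
    using assms has_derivative_linear linear_scale by fastforce
  ultimately show ?thesis by (simp add: has_field_derivative_def)
qed

lemma difference_quotient_tendsto_derivative:
  fixes f :: "'a::real_normed_vector \<Rightarrow> real"
  assumes "(f has_derivative D) (at x)" and "filterlim h (at 0) F"
  shows "((\<lambda>m. (f (x + h m *\<^sub>R e) - f x) / h m) \<longlongrightarrow> D e) F"
proof -
  have "((\<lambda>t. f (x + t *\<^sub>R e)) has_real_derivative D e) (at 0)"
    using assms(1) by (intro has_real_derivative_along_line) simp
  then have "((\<lambda>t. (f (x + t *\<^sub>R e) - f x) / t) \<longlongrightarrow> D e) (at 0)"
    by (simp add: DERIV_def)
  then show ?thesis using assms(2) filterlim_compose by blast
qed

lemma difference_quotient_bound:
  fixes f :: "'a::real_normed_vector \<Rightarrow> real"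
  assumes "\<And>y. (f has_derivative D y) (at y)" "\<And>y. \<bar>D y e\<bar> \<le> B" "h > 0"
  shows "\<bar>f (x + h *\<^sub>R e) - f x\<bar> \<le> B * h"
proof -
  obtain z where "f (x + h *\<^sub>R e) - f (x + 0 *\<^sub>R e) = (h - 0) * D (x + z *\<^sub>R e) e"
    using MVT2[of 0 h "\<lambda>t. f (x + t *\<^sub>R e)" "\<lambda>t. D (x + t *\<^sub>R e) e"] assms
    by (blast intro: has_real_derivative_along_line)
  then show ?thesis
    using assms(2)[of "x + z *\<^sub>R e"] \<open>h > 0\<close> by (simp add: abs_mult mult.commute mult_left_mono)
qed

lemma difference_quotient_dominated:
  fixes f :: "'a::real_normed_vector \<Rightarrow> real"
  assumes "\<And>y. (f has_derivative D y) (at y)" "\<And>y. \<bar>D y e\<bar> \<le> B"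
    and "\<And>x. x \<notin> S \<Longrightarrow> f x = 0" "\<And>x. x \<in> S \<Longrightarrow> norm x \<le> R" "0 < h" "h \<le> 1"
  shows "norm ((f (x + h *\<^sub>R e) - f x) / h) \<le> B * indicator (cball 0 (R + norm e)) x"
proof (cases "x \<in> cball 0 (R + norm e)")
  case True
  then show ?thesis
    using difference_quotient_bound[OF assms(1,2,5)] assms(5) by (simp add: divide_le_eq abs_div)
next
  case False
  have "norm (h *\<^sub>R e) \<le> norm e"
    using assms(5,6) by (simp add: mult_left_le_one_le)
  moreover have "norm x \<le> norm (x + h *\<^sub>R e) + norm (h *\<^sub>R e)"
    using norm_triangle_ineq4[of "x + h *\<^sub>R e" "h *\<^sub>R e"] by simp
  ultimately have "x \<notin> S" "x + h *\<^sub>R e \<notin> S"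
    using False assms(4)[of x] assms(4)[of "x + h *\<^sub>R e"] norm_ge_zero[of e] by force+
  then show ?thesis using False assms(3) by simp
qed

text \<open>The difference quotients along \<open>e\<close> integrate to zero by translation invariance, are
  supported in a fixed compact set, and are bounded by the mean value theorem; dominated
  convergence passes to the limit.\<close>
lemma integral_directional_derivative_eq_0:
  fixes f :: "'a::euclidean_space \<Rightarrow> real"
  assumes der: "\<And>x. (f has_derivative D x) (at x)" and "compact S"
    and zero: "\<And>x. x \<notin> S \<Longrightarrow> f x = 0" and bound: "\<And>x. \<bar>D x e\<bar> \<le> B"
  shows "integrable lborel (\<lambda>x. D x e)" "(\<integral>x. D x e \<partial>lborel) = 0"
proof -
  have cont: "continuous_on UNIV f"
    using der by (meson continuous_at_imp_continuous_on has_derivative_continuous)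
  then have meas: "f \<in> borel_measurable borel"
    by (rule borel_measurable_continuous_onI)
  have int: "integrable lborel f"
    using integrable_indicator_mult_continuous_on[OF \<open>compact S\<close> _ cont] zero by simp
  obtain R where R: "\<And>x. x \<in> S \<Longrightarrow> norm x \<le> R"
    using compact_imp_bounded[OF \<open>compact S\<close>] unfolding bounded_iff by auto
  define h :: "nat \<Rightarrow> real" where "h m = 1 / Suc m" for m
  have h: "0 < h m" "h m \<le> 1" for m
    by (simp_all add: h_def)
  have h_tendsto: "filterlim h (at 0) sequentially"
    unfolding h_def
    by (intro filterlim_atI) (auto intro!: LIMSEQ_Suc[OF lim_const_over_n] simp del: of_nat_Suc)
  define q where "q m x = (f (x + h m *\<^sub>R e) - f x) / h m" for m x
  define T where "T = cball (0::'a) (R + norm e)"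
  have q_meas: "q m \<in> borel_measurable lborel" for m
    unfolding q_def by (intro borel_measurable_divide borel_measurable_diff borel_measurable_const
       measurable_compose[OF _ meas] borel_measurable_add) (auto simp: measurable_lborel1)
  have q_integral: "(\<integral>x. q m x \<partial>lborel) = 0" for m
    using int integrable_lborel_translate[OF int] integral_lborel_translate[OF meas]
    by (simp add: q_def)
  have q_tendsto: "(\<lambda>m. q m x) \<longlonglongrightarrow> D x e" for x
    unfolding q_def by (rule difference_quotient_tendsto_derivative[OF der h_tendsto])
  have q_bound: "norm (q m x) \<le> B * indicator T x" for m x
    unfolding q_def T_def using der bound zero R h by (rule difference_quotient_dominated)
  have T_integrable: "integrable lborel (\<lambda>x. B * indicator T x)"
    by (intro integrable_mult_right integrable_real_indicator)
       (auto simp: T_def borel_compact intro!: emeasure_compact_finite[simplified])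
  have D_meas: "(\<lambda>x. D x e) \<in> borel_measurable lborel"
    by (rule borel_measurable_LIMSEQ_real[OF q_tendsto q_meas])
  show "integrable lborel (\<lambda>x. D x e)"
    by (rule integrable_dominated_convergence[where s=q, OF D_meas q_meas T_integrable])
      (use q_tendsto q_bound in auto)
  have "(\<lambda>m. \<integral>x. q m x \<partial>lborel) \<longlonglongrightarrow> (\<integral>x. D x e \<partial>lborel)"
    by (rule integral_dominated_convergence[where s=q, OF D_meas q_meas T_integrable])
      (use q_tendsto q_bound in auto)
  then show "(\<integral>x. D x e \<partial>lborel) = 0"
    using q_integral LIMSEQ_unique by (simp add: LIMSEQ_const_iff)
qed

section \<open>Gradients, Hessians and \<open>C\<^sup>k\<close> functions\<close>

lemma zero_outside_supp: "x \<notin> supp f \<Longrightarrow> f x = 0"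
  using closure_subset[of "{x. f x \<noteq> 0}"] by (auto simp: supp_def)

lemma has_derivative_vec_componentwise:
  fixes F :: "real^'m \<Rightarrow> real^'n"
  assumes "\<And>i. ((\<lambda>x. F x $ i) has_derivative (\<lambda>h. F' h $ i)) (at x)"
  shows "(F has_derivative F') (at x)"
proof (rule has_derivative_componentwise_within[THEN iffD2], rule ballI)
  fix b :: "real^'n" assume "b \<in> Basis"
  then obtain i u where "u \<in> (Basis :: real set)" "b = axis i u"
    unfolding Basis_vec_def by blast
  then have b: "b = axis i 1" by simp
  show "((\<lambda>x. F x \<bullet> b) has_derivative (\<lambda>x. F' x \<bullet> b)) (at x)"
    using assms[of i] by (simp add: b inner_axis)
qed

lemma has_derivative_0_if_vanishing_on_open:
  assumes "open V" "x \<in> V" "\<And>y. y \<in> V \<Longrightarrow> f y = 0"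
  shows "(f has_derivative (\<lambda>_. 0)) (at x)"
  by (rule has_derivative_transform_within_open[of "\<lambda>_. 0" _ _ _ V]) (use assms in auto)

lemma grad_eq_0_outside_supp:
  fixes f :: "real^'n \<Rightarrow> real"
  assumes "x \<notin> supp f"
  shows "grad f x = 0"
proof -
  have "(f has_derivative (\<lambda>_. 0)) (at x)"
    using assms zero_outside_supp
    by (intro has_derivative_0_if_vanishing_on_open[of "- supp f"]) (simp_all add: supp_def open_Compl)
  then have "frechet_derivative f (at x) = (\<lambda>_. 0)"
    using frechet_derivative_at by metis
  then show ?thesis
    by (simp add: grad_def vec_eq_iff)
qed

lemma Ck_on_continuous_on: "Ck_on k U f \<Longrightarrow> continuous_on U f"
  by (cases k) (simp_all add: differentiable_imp_continuous_on)

lemma Ck_on_Suc_differentiable: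
  "open U \<Longrightarrow> Ck_on (Suc k) U f \<Longrightarrow> x \<in> U \<Longrightarrow> f differentiable (at x)"
  by (simp add: differentiable_on_eq_differentiable_at)

lemma Ck_on_Suc_continuous_on_grad:
  assumes "Ck_on (Suc k) U f" shows "continuous_on U (grad f)"
proof -
  have "continuous_on U (\<lambda>x. \<chi> i. grad f x $ i)"
    using assms by (intro continuous_on_vec_lambda) (auto intro: Ck_on_continuous_on)
  then show ?thesis by simp
qed

lemma Ck_on_2_continuous_on_hess:
  assumes "Ck_on 2 U f" shows "continuous_on U (hess f)"
proof -
  have "continuous_on U (\<lambda>x. hess f x $ i $ j)" for i j
    using assms by (simp add: numeral_2_eq_2 hess_def)
  then have "continuous_on U (\<lambda>x. \<chi> i j. hess f x $ i $ j)"
    by (intro continuous_on_vec_lambda)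
  then show ?thesis by simp
qed

lemma norm_column_le_cart: "norm (\<chi> k. A $ k $ i) \<le> norm (A :: real^'n^'n)"
  by (rule norm_le_componentwise_cart) (simp add: component_le_norm_cart)

lemma abs_diag_le_norm_cart: "\<bar>A $ i $ i\<bar> \<le> norm (A :: real^'n^'n)"
  using component_le_norm_cart[of "A $ i" i] Finite_Cartesian_Product.norm_nth_le[of A i] by linarith

lemma young_quarter: fixes x y :: real shows "x * y \<le> x\<^sup>2 / 4 + y\<^sup>2"
proof -
  have "0 \<le> (x / 2 - y)\<^sup>2" by simp
  then show ?thesis by (simp add: power2_eq_square field_simps)
qed

text \<open>The pointwise absorption step: \<open>r = |\<nabla>w|\<close>, \<open>P\<^sub>e\<close> stands for \<open>r\<^sup>2\<^sup>s\<^sup>-\<^sup>2\<^sup>+\<^sup>e\<close>,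
  \<open>z = \<zeta>\<close>, \<open>G = |\<nabla>\<zeta>|\<close>, \<open>h = |\<nabla>\<^sup>2w|\<close> and \<open>R\<close> is the divergence minus its main term.\<close>
lemma young_absorb:
  fixes K v M r G h c z P0 P2 P4 R :: real
  assumes "K \<ge> 0" "\<bar>v\<bar> \<le> M" "r \<ge> 0" "G \<ge> 0" "h \<ge> 0" "c \<ge> 0" "P0 \<ge> 0"
    and P2: "P2 = P0 * r\<^sup>2" and P4: "P4 = P2 * r\<^sup>2"
    and R: "\<bar>R\<bar> \<le> 2 * \<bar>v\<bar> * \<bar>z\<bar> * (K * P2) * G * r + \<bar>v\<bar> * z\<^sup>2 * c * (K * P2) * h"
  shows "\<bar>R\<bar> \<le> K * P4 * z\<^sup>2 / 2 + M\<^sup>2 * (c\<^sup>2 * (K * P0 * h\<^sup>2 * z\<^sup>2) + 4 * (K * P2 * G\<^sup>2))"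
proof -
  have v2: "v\<^sup>2 \<le> M\<^sup>2"
    using assms(2) abs_le_square_iff by force
  have KP: "K * P0 \<ge> 0" "K * P2 \<ge> 0"
    using assms by (simp_all add: P2)
  have "(\<bar>z\<bar> * r) * (2 * \<bar>v\<bar> * G) \<le> (\<bar>z\<bar> * r)\<^sup>2 / 4 + (2 * \<bar>v\<bar> * G)\<^sup>2"
    by (rule young_quarter)
  also have "\<dots> \<le> z\<^sup>2 * r\<^sup>2 / 4 + 4 * M\<^sup>2 * G\<^sup>2"
    using v2 by (simp add: power_mult_distrib mult_right_mono)
  finally have "K * P2 * ((\<bar>z\<bar> * r) * (2 * \<bar>v\<bar> * G)) \<le> K * P2 * (z\<^sup>2 * r\<^sup>2 / 4 + 4 * M\<^sup>2 * G\<^sup>2)"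
    using KP by (intro mult_left_mono) auto
  then have gradient_term: "2 * \<bar>v\<bar> * \<bar>z\<bar> * (K * P2) * G * r
      \<le> K * P4 * z\<^sup>2 / 4 + 4 * M\<^sup>2 * (K * P2 * G\<^sup>2)"
    by (simp add: P4 algebra_simps)
  have "r\<^sup>2 * (\<bar>v\<bar> * c * h) \<le> (r\<^sup>2)\<^sup>2 / 4 + (\<bar>v\<bar> * c * h)\<^sup>2"
    by (rule young_quarter)
  also have "\<dots> \<le> (r\<^sup>2)\<^sup>2 / 4 + M\<^sup>2 * c\<^sup>2 * h\<^sup>2"
    using v2 by (simp add: power_mult_distrib mult_right_mono)
  finally have "K * P0 * z\<^sup>2 * (r\<^sup>2 * (\<bar>v\<bar> * c * h)) \<le> K * P0 * z\<^sup>2 * ((r\<^sup>2)\<^sup>2 / 4 + M\<^sup>2 * c\<^sup>2 * h\<^sup>2)"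
    using KP by (intro mult_left_mono) auto
  then have hessian_term: "\<bar>v\<bar> * z\<^sup>2 * c * (K * P2) * h
      \<le> K * P4 * z\<^sup>2 / 4 + M\<^sup>2 * (c\<^sup>2 * (K * P0 * h\<^sup>2 * z\<^sup>2))"
    by (simp add: P4 P2 power2_eq_square algebra_simps)
  show ?thesis
    using R gradient_term hessian_term by (simp add: algebra_simps)
qed

section \<open>The coefficient \<open>K\<close> and the radial profile\<close>

lemma pw_nonneg: "t \<ge> 0 \<Longrightarrow> pw t e \<ge> 0"
  by (simp add: pw_def)

lemma pw_mono: "0 \<le> t1 \<Longrightarrow> t1 \<le> t2 \<Longrightarrow> e \<ge> 0 \<Longrightarrow> pw t1 e \<le> pw t2 e"
  by (simp add: pw_def powr_mono2)

lemma continuous_on_pw: assumes "e \<ge> 0" shows "continuous_on {0..} (\<lambda>t. pw t e)"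
proof (cases "e = 0")
  case False
  then have "continuous_on {0..} (\<lambda>t::real. t powr e)"
    using assms by (intro continuous_on_powr') (auto intro!: continuous_intros)
  then show ?thesis unfolding pw_def using False by simp
qed (simp add: pw_def)

lemma pw_add_2: "t \<ge> 0 \<Longrightarrow> e \<ge> 0 \<Longrightarrow> pw t (e + 2) = pw t e * t\<^sup>2"
  by (cases "t = 0") (auto simp: pw_def powr_add powr_numeral)

lemma pw_eq_mult_powr: "t > 0 \<Longrightarrow> e \<ge> 1 \<Longrightarrow> pw t e = t * t powr (e - 1)"
  by (simp add: pw_def powr_mult_base)

locale growth_function =
  fixes N :: nat and a \<alpha> :: "nat \<Rightarrow> real"
  assumes exponent_0: "\<alpha> 0 = 0" and exponents_increasing: "\<forall>j<N. \<alpha> j < \<alpha> (Suc j)"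
    and coeff_0_pos: "a 0 > 0" and coeffs_nonneg: "\<forall>j\<le>N. a j \<ge> 0"
begin

abbreviation "g \<equiv> gfun N a \<alpha>"
abbreviation "sl \<equiv> sol N a \<alpha>"
abbreviation "K \<equiv> Kfun N a \<alpha>"

definition g_deriv :: "real \<Rightarrow> real" where
  "g_deriv t = (\<Sum>j\<le>N. a j * (if \<alpha> j = 0 then 0 else \<alpha> j * t powr (\<alpha> j - 1)))"

lemma exponent_nonneg: "j \<le> N \<Longrightarrow> \<alpha> j \<ge> 0"
proof (induction j)
  case (Suc j)
  then show ?case
    using exponents_increasing by (metis Suc_le_lessD less_imp_le_nat order.strict_trans1 order_less_imp_le)
qed (simp add: exponent_0)

lemma g_ge_coeff_0: assumes "t \<ge> 0" shows "g t \<ge> a 0"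
proof -
  have "(\<Sum>j\<in>{1..N}. a j * pw t (\<alpha> j)) \<ge> 0"
    using coeffs_nonneg assms by (intro sum_nonneg mult_nonneg_nonneg pw_nonneg) auto
  then show ?thesis
    unfolding gfun_def by (simp add: atMost_atLeast0 sum.atLeast_Suc_atMost exponent_0 pw_def)
qed

lemma g_pos: "t \<ge> 0 \<Longrightarrow> g t > 0"
  using g_ge_coeff_0 coeff_0_pos by (meson less_le_trans)

lemma g_mono: "0 \<le> t1 \<Longrightarrow> t1 \<le> t2 \<Longrightarrow> g t1 \<le> g t2"
  unfolding gfun_def using coeffs_nonneg exponent_nonneg
  by (intro sum_mono mult_left_mono pw_mono) auto

lemma continuous_on_g: "continuous_on {0..} g"
  unfolding gfun_def using exponent_nonneg
  by (intro continuous_intros continuous_on_mult_left continuous_on_pw) auto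

lemma g_has_derivative: "t > 0 \<Longrightarrow> (g has_real_derivative g_deriv t) (at t)"
  unfolding gfun_def g_deriv_def pw_def
  by (intro DERIV_sum DERIV_cmult) (auto intro!: has_real_derivative_powr)

lemma g_deriv_nonneg: "t > 0 \<Longrightarrow> g_deriv t \<ge> 0"
  unfolding g_deriv_def using coeffs_nonneg exponent_nonneg by (intro sum_nonneg) auto

lemma mult_g_has_derivative:
  "t > 0 \<Longrightarrow> ((\<lambda>t. t * g t) has_real_derivative g t + t * g_deriv t) (at t)"
  using g_has_derivative by (auto intro!: derivative_eq_intros)

lemma mult_g_strict_mono: assumes "0 \<le> t1" "t1 < t2" shows "t1 * g t1 < t2 * g t2"
proof -
  have "t1 * g t1 \<le> t1 * g t2"
    using g_mono[of t1 t2] assms by (intro mult_left_mono) auto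
  also have "\<dots> < t2 * g t2"
    using g_pos[of t2] assms by (intro mult_strict_right_mono) auto
  finally show ?thesis .
qed

lemma mult_g_inj: "0 \<le> t1 \<Longrightarrow> 0 \<le> t2 \<Longrightarrow> t1 * g t1 = t2 * g t2 \<Longrightarrow> t1 = t2"
  using mult_g_strict_mono by (metis linorder_neqE_linordered_idom order_less_irrefl)

lemma mult_g_surj: assumes "\<xi> \<ge> 0" shows "\<exists>t\<ge>0. t * g t = \<xi>"
proof -
  have "\<xi> = (\<xi> / a 0) * a 0"
    using coeff_0_pos by simp
  also have "\<dots> \<le> (\<xi> / a 0) * g (\<xi> / a 0)"
    using assms coeff_0_pos g_ge_coeff_0 by (intro mult_left_mono) auto
  finally have "\<xi> \<le> (\<xi> / a 0) * g (\<xi> / a 0)" .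
  moreover have "continuous_on {0..\<xi>/a 0} (\<lambda>t. t * g t)"
    by (intro continuous_intros continuous_on_subset[OF continuous_on_g]) auto
  ultimately show ?thesis
    using IVT'[of "\<lambda>t. t * g t" 0 \<xi> "\<xi>/a 0"] assms coeff_0_pos by auto
qed

lemma sol_solves: assumes "\<xi> \<ge> 0" shows "sl \<xi> \<ge> 0" "sl \<xi> * g (sl \<xi>) = \<xi>"
proof -
  obtain t where t: "t \<ge> 0" "t * g t = \<xi>"
    using mult_g_surj assms by blast
  have "sl \<xi> = t"
    unfolding sol_def by (rule the_equality) (use t mult_g_inj in auto)
  then show "sl \<xi> \<ge> 0" "sl \<xi> * g (sl \<xi>) = \<xi>"
    using t by simp_all
qed

lemma sol_mult_g: "t \<ge> 0 \<Longrightarrow> sl (t * g t) = t"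
  using sol_solves[of "t * g t"] mult_g_inj g_pos by (meson less_imp_le mult_nonneg_nonneg)

lemma K_pos: "\<xi> \<ge> 0 \<Longrightarrow> K \<xi> > 0"
  unfolding Kfun_def using sol_solves g_pos by simp

lemma K_le: "\<xi> \<ge> 0 \<Longrightarrow> K \<xi> \<le> 1 / a 0"
  unfolding Kfun_def using sol_solves g_ge_coeff_0 coeff_0_pos by (simp add: frac_le)

lemma sol_eq_mult_K: "\<xi> \<ge> 0 \<Longrightarrow> sl \<xi> = \<xi> * K \<xi>"
  unfolding Kfun_def using sol_solves[of \<xi>] g_pos[of "sl \<xi>"] by (simp add: field_simps)

lemma sol_le: "\<xi> \<ge> 0 \<Longrightarrow> sl \<xi> \<le> \<xi> / a 0"
  using sol_eq_mult_K K_le by (simp add: mult_left_mono divide_inverse)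

lemma sol_pos: "\<xi> > 0 \<Longrightarrow> sl \<xi> > 0"
  using sol_eq_mult_K K_pos by simp

lemma sol_0: "sl 0 = 0"
  using sol_le[of 0] sol_solves(1)[of 0] by simp

lemma isCont_sol: assumes "\<xi> > 0" shows "isCont sl \<xi>"
proof -
  define t where "t = sl \<xi>"
  have t: "t > 0" "t * g t = \<xi>"
    using sol_pos sol_solves assms by (auto simp: t_def)
  have "isCont sl (t * g t)"
  proof (rule isCont_inverse_function[where f="\<lambda>t. t * g t" and x=t and d="t/2"])
    fix z assume "\<bar>z - t\<bar> \<le> t / 2"
    then have "z > 0" using t(1) by linarith
    then show "sl (z * g z) = z" "isCont (\<lambda>t. t * g t) z"
      using sol_mult_g DERIV_isCont[OF mult_g_has_derivative] by auto
  qed (use t in auto)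
  then show ?thesis using t by simp
qed

lemma continuous_on_sol: "continuous_on {0..} sl"
proof (clarsimp simp: continuous_on_eq_continuous_within)
  fix x :: real assume x: "0 \<le> x"
  show "continuous (at x within {0..}) sl"
  proof (cases "x = 0")
    case True
    have "(sl \<longlongrightarrow> 0) (at 0 within {0..})"
    proof (rule tendsto_sandwich[of "\<lambda>_. 0" _ _ "\<lambda>y. y / a 0"])
      show "\<forall>\<^sub>F y in at 0 within {0..}. 0 \<le> sl y" "\<forall>\<^sub>F y in at 0 within {0..}. sl y \<le> y / a 0"
        by (auto simp: eventually_at_filter sol_solves sol_le)
      show "((\<lambda>y. y / a 0) \<longlongrightarrow> 0) (at 0 within {0..})"
        using coeff_0_pos by (auto intro!: tendsto_eq_intros)
    qed auto
    then show ?thesis using True sol_0 by (simp add: continuous_within)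
  next
    case False
    then show ?thesis
      using x isCont_sol by (simp add: continuous_at_imp_continuous_at_within)
  qed
qed

lemma continuous_on_K: "continuous_on {0..} K"
  unfolding Kfun_def
  by (intro continuous_intros continuous_on_compose2[OF continuous_on_g continuous_on_sol])
     (use sol_solves g_pos in \<open>auto simp: less_imp_neq[symmetric]\<close>)

definition sol_deriv :: "real \<Rightarrow> real" where
  "sol_deriv \<xi> = inverse (g (sl \<xi>) + sl \<xi> * g_deriv (sl \<xi>))"

lemma sol_has_derivative: assumes "\<xi> > 0" shows "(sl has_real_derivative sol_deriv \<xi>) (at \<xi>)"
proof -
  have t: "sl \<xi> > 0" "sl \<xi> * g (sl \<xi>) = \<xi>"
    using sol_pos sol_solves assms by auto
  then have "g (sl \<xi>) + sl \<xi> * g_deriv (sl \<xi>) > 0"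
    using g_pos g_deriv_nonneg by (simp add: add_pos_nonneg)
  then show ?thesis
    unfolding sol_deriv_def using assms t sol_solves isCont_sol
    by (intro DERIV_inverse_function[where f="\<lambda>t. t * g t" and a=0 and b="\<xi>+1"]
        mult_g_has_derivative) auto
qed

text \<open>The inverse function rule gives \<open>sol' = 1/(g + t g')\<close> at \<open>t = sol \<xi>\<close>, which is at most
  \<open>1/g = K\<close> because \<open>g' \<ge> 0\<close>.\<close>
lemma sol_deriv_nonneg: "\<xi> > 0 \<Longrightarrow> sol_deriv \<xi> \<ge> 0"
  and sol_deriv_le_K: "\<xi> > 0 \<Longrightarrow> sol_deriv \<xi> \<le> K \<xi>"
  unfolding sol_deriv_def Kfun_def
  using g_pos[of "sl \<xi>"] g_deriv_nonneg[of "sl \<xi>"] sol_pos[of \<xi>]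
  by (auto simp: inverse_eq_divide intro!: frac_le)

end

locale growth_function_exponent = growth_function +
  fixes s :: real
  assumes exponent_ge_1: "s \<ge> 1"
begin

text \<open>The radial profile \<open>\<rho>(r) = K(r) r\<^sup>2\<^sup>s\<close>, written as \<open>sol(r) r\<^sup>2\<^sup>s\<^sup>-\<^sup>1\<close> so that its
  derivative comes from that of \<open>sol\<close>.\<close>
definition rho :: "real \<Rightarrow> real" where
  "rho r = sl r * r powr (2 * s - 1)"

definition rho_deriv :: "real \<Rightarrow> real" where
  "rho_deriv r = (sol_deriv r + (2 * s - 1) * K r) * r powr (2 * s - 1)"

lemma rho_eq: assumes "r \<ge> 0" shows "rho r = K r * pw r (2 * s)"
proof (cases "r = 0")
  case False
  then have "rho r = K r * (r * r powr (2 * s - 1))"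
    using assms by (simp add: rho_def sol_eq_mult_K)
  then show ?thesis
    using False assms exponent_ge_1 by (simp add: pw_eq_mult_powr)
qed (use exponent_ge_1 sol_0 in \<open>simp add: rho_def pw_def\<close>)

lemma rho_nonneg: "r \<ge> 0 \<Longrightarrow> rho r \<ge> 0"
  using rho_eq K_pos pw_nonneg by (simp add: less_imp_le)

lemma rho_le: assumes "r \<ge> 0" shows "rho r \<le> r powr (2 * s) / a 0"
proof -
  have "rho r \<le> 1 / a 0 * pw r (2 * s)"
    using assms rho_eq K_le[of r] pw_nonneg[of r "2 * s"] by (metis mult_right_mono)
  then show ?thesis
    using exponent_ge_1 by (simp add: pw_def)
qed

lemma rho_has_derivative: assumes "r > 0" shows "(rho has_real_derivative rho_deriv r) (at r)"
proof -
  have "(rho has_real_derivative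
      sol_deriv r * r powr (2 * s - 1) + sl r * ((2 * s - 1) * r powr (2 * s - 1 - 1))) (at r)"
    unfolding rho_def using assms
    by (auto intro!: derivative_eq_intros sol_has_derivative has_real_derivative_powr)
  moreover have "sl r * r powr (2 * s - 1 - 1) = K r * r powr (2 * s - 1)"
    using assms by (simp add: sol_eq_mult_K powr_mult_base)
  ultimately show ?thesis
    by (simp add: rho_deriv_def algebra_simps)
qed

lemma rho_deriv_nonneg: "r > 0 \<Longrightarrow> rho_deriv r \<ge> 0"
  unfolding rho_deriv_def using sol_deriv_nonneg K_pos exponent_ge_1
  by (simp add: add_nonneg_nonneg less_imp_le)

lemma rho_deriv_le: "r > 0 \<Longrightarrow> rho_deriv r \<le> 2 * s * K r * r powr (2 * s - 1)"
  unfolding rho_deriv_def using sol_deriv_le_K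
  by (simp add: mult_right_mono algebra_simps)

definition rho_radial :: "'a::real_inner \<Rightarrow> real" where
  "rho_radial p = rho (norm p)"

definition rho_radial_deriv :: "'a::real_inner \<Rightarrow> 'a \<Rightarrow> real" where
  "rho_radial_deriv p v = (if p = 0 then 0 else rho_deriv (norm p) * inner p v / norm p)"

text \<open>At the origin \<open>|\<rho>(|p|)| \<le> |p|\<^sup>2\<^sup>s / a\<^sub>0 \<le> |p|\<^sup>2 / a\<^sub>0\<close> near \<open>0\<close>, since \<open>s \<ge> 1\<close>.\<close>
lemma rho_radial_has_derivative_0:
  "(rho_radial has_derivative rho_radial_deriv 0) (at (0::'a::real_inner))"
proof -
  have bound: "\<bar>rho_radial y\<bar> / norm y \<le> norm y / a 0" if y: "norm y < 1" "y \<noteq> 0" for y :: 'a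
  proof -
    have "\<bar>rho_radial y\<bar> \<le> norm y powr (2 * s) / a 0"
      unfolding rho_radial_def using rho_le rho_nonneg by simp
    also have "\<dots> \<le> norm y powr 2 / a 0"
      using y exponent_ge_1 coeff_0_pos by (intro divide_right_mono powr_mono') auto
    finally show ?thesis
      using y by (simp add: divide_le_eq power2_eq_square field_simps)
  qed
  have "((\<lambda>y. \<bar>rho_radial y\<bar> / norm y) \<longlongrightarrow> 0) (at (0::'a))"
  proof (rule tendsto_sandwich[of "\<lambda>_. 0" _ _ "\<lambda>y. norm y / a 0"])
    show "\<forall>\<^sub>F y in at (0::'a). \<bar>rho_radial y\<bar> / norm y \<le> norm y / a 0"
      unfolding eventually_at using bound by (intro exI[of _ 1]) (auto simp: dist_norm)
    show "((\<lambda>y. norm y / a 0) \<longlongrightarrow> 0) (at (0::'a))"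
      using coeff_0_pos by (auto intro!: tendsto_eq_intros)
  qed auto
  then show ?thesis
    by (simp add: has_derivative_iff_norm rho_radial_def rho_def sol_0 rho_radial_deriv_def[abs_def])
qed

lemma rho_radial_has_derivative: "(rho_radial has_derivative rho_radial_deriv p) (at p)"
proof (cases "p = 0")
  case False
  have "(rho has_derivative (*) (rho_deriv (norm p))) (at (norm p))"
    using rho_has_derivative[of "norm p"] False by (simp add: has_field_derivative_def)
  from has_derivative_compose[OF has_derivative_norm[OF False] this]
  have "(rho_radial has_derivative (\<lambda>v. rho_deriv (norm p) * inner v (sgn p))) (at p)"
    unfolding rho_radial_def[abs_def] .
  moreover have "(\<lambda>v. rho_deriv (norm p) * inner v (sgn p)) = rho_radial_deriv p"
    using False by (auto simp: rho_radial_deriv_def sgn_div_norm inner_commute divide_inverse)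
  ultimately show ?thesis by simp
qed (simp add: rho_radial_has_derivative_0)

lemma rho_radial_deriv_bound:
  "\<bar>rho_radial_deriv p v\<bar> \<le> 2 * s * K (norm p) * norm p powr (2 * s - 1) * norm v"
proof (cases "p = 0")
  case False
  have "\<bar>rho_radial_deriv p v\<bar> = rho_deriv (norm p) * (\<bar>inner p v\<bar> / norm p)"
    using False rho_deriv_nonneg[of "norm p"] by (simp add: rho_radial_deriv_def abs_mult)
  also have "\<dots> \<le> rho_deriv (norm p) * norm v"
    using False rho_deriv_nonneg[of "norm p"] Cauchy_Schwarz_ineq2[of p v]
    by (intro mult_left_mono) (auto simp: divide_le_eq mult.commute)
  also have "\<dots> \<le> 2 * s * K (norm p) * norm p powr (2 * s - 1) * norm v"
    using False rho_deriv_le[of "norm p"] by (intro mult_right_mono) auto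
  finally show ?thesis .
qed (use exponent_ge_1 K_pos[of 0] in \<open>simp add: rho_radial_deriv_def\<close>)

end

section \<open>The divergence identity and the estimate\<close>

locale interpolation_setting = growth_function_exponent N a \<alpha> s for N a \<alpha> s +
  fixes U :: "(real^'n) set" and \<zeta> w :: "real^'n \<Rightarrow> real"
  assumes open_U: "open U" and test_fun_\<zeta>: "test_fun U \<zeta>" and C2_w: "Ck_on 2 U w"
begin

abbreviation "S \<equiv> supp \<zeta>"
abbreviation "p x \<equiv> grad w x"
abbreviation "H x \<equiv> hess w x"

definition theta :: "real^'n \<Rightarrow> real" where
  "theta x = rho_radial (p x)"

definition dgrad :: "real^'n \<Rightarrow> 'n \<Rightarrow> real^'n" where
  "dgrad x i = (\<chi> k. H x $ k $ i)"

lemma compact_S: "compact S" and S_subset_U: "S \<subseteq> U"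
  using test_fun_\<zeta> by (simp_all add: test_fun_def)

lemma C1_\<zeta>: "Ck_on 1 UNIV \<zeta>"
  using test_fun_\<zeta> by (simp add: test_fun_def)

lemma \<zeta>_differentiable: "\<zeta> differentiable (at x)"
  using Ck_on_Suc_differentiable[OF open_UNIV C1_\<zeta>[unfolded One_nat_def]] by simp

lemma continuous_on_\<zeta>: "continuous_on UNIV \<zeta>"
  using C1_\<zeta> Ck_on_continuous_on by blast

lemma continuous_on_grad_\<zeta>: "continuous_on UNIV (grad \<zeta>)"
  using C1_\<zeta> Ck_on_Suc_continuous_on_grad[of 0] by simp

lemma w_differentiable: "x \<in> U \<Longrightarrow> w differentiable (at x)"
  using Ck_on_Suc_differentiable[OF open_U C2_w[unfolded numeral_2_eq_2]] .

lemma grad_w_differentiable: "x \<in> U \<Longrightarrow> (\<lambda>y. p y $ k) differentiable (at x)"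
  using Ck_on_Suc_differentiable[OF open_U, of 0 "\<lambda>y. p y $ k"] C2_w by (simp add: numeral_2_eq_2)

lemma continuous_on_w: "continuous_on U w"
  using C2_w Ck_on_continuous_on by blast

lemma continuous_on_grad_w: "continuous_on U p"
  using C2_w Ck_on_Suc_continuous_on_grad[of 1] by (simp add: numeral_2_eq_2)

lemma continuous_on_hess_w: "continuous_on U H"
  using C2_w by (rule Ck_on_2_continuous_on_hess)

lemma theta_has_derivative:
  assumes "x \<in> U"
  shows "(theta has_derivative
    (\<lambda>v. rho_radial_deriv (p x) (\<chi> k. frechet_derivative (\<lambda>y. p y $ k) (at x) v))) (at x)"
proof -
  have "(p has_derivative (\<lambda>v. \<chi> k. frechet_derivative (\<lambda>y. p y $ k) (at x) v)) (at x)"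
    using grad_w_differentiable[OF assms, THEN frechet_derivative_works[THEN iffD1]]
    by (intro has_derivative_vec_componentwise) simp
  from has_derivative_compose[OF this rho_radial_has_derivative]
  show ?thesis unfolding theta_def[abs_def] .
qed

definition weight :: "real^'n \<Rightarrow> real \<Rightarrow> real" where
  "weight x e = K (norm (p x)) * pw (norm (p x)) e"

lemma weight_nonneg: "weight x e \<ge> 0"
  using K_pos[of "norm (p x)"] by (simp add: weight_def pw_nonneg)

lemma continuous_on_weight: "e \<ge> 0 \<Longrightarrow> continuous_on U (\<lambda>x. weight x e)"
  unfolding weight_def
  by (intro continuous_intros continuous_on_compose2[OF continuous_on_K]
      continuous_on_compose2[OF continuous_on_pw] continuous_on_grad_w) auto

lemma theta_eq: "theta x = weight x (2 * s)"
  by (simp add: theta_def rho_radial_def rho_eq weight_def)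

lemma rho_radial_deriv_dgrad_le:
  "\<bar>rho_radial_deriv (p x) (dgrad x i) * p x $ i\<bar> \<le> 2 * s * weight x (2 * s) * norm (H x)"
proof (cases "p x = 0")
  case False
  let ?r = "norm (p x)"
  have "\<bar>rho_radial_deriv (p x) (dgrad x i) * p x $ i\<bar>
      \<le> (2 * s * K ?r * ?r powr (2 * s - 1) * norm (dgrad x i)) * ?r"
    unfolding abs_mult using rho_radial_deriv_bound component_le_norm_cart exponent_ge_1 K_pos[of ?r]
    by (intro mult_mono) auto
  also have "\<dots> \<le> (2 * s * K ?r * ?r powr (2 * s - 1) * norm (H x)) * ?r"
    using norm_column_le_cart exponent_ge_1 K_pos[of ?r]
    by (intro mult_right_mono mult_left_mono) (auto simp: dgrad_def)
  also have "\<dots> = 2 * s * weight x (2 * s) * norm (H x)"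
    using False exponent_ge_1 by (simp add: weight_def pw_eq_mult_powr algebra_simps)
  finally show ?thesis .
qed (use exponent_ge_1 in \<open>simp add: weight_nonneg\<close>)

definition flux :: "'n \<Rightarrow> real^'n \<Rightarrow> real" where
  "flux i x = (if x \<in> U then w x * (\<zeta> x * \<zeta> x) * theta x * p x $ i else 0)"

definition main_term :: "'n \<Rightarrow> real^'n \<Rightarrow> real" where
  "main_term i x = p x $ i * (\<zeta> x * \<zeta> x) * theta x * p x $ i"

definition cutoff_term :: "'n \<Rightarrow> real^'n \<Rightarrow> real" where
  "cutoff_term i x = w x * (2 * \<zeta> x * grad \<zeta> x $ i) * theta x * p x $ i"

definition hessian_term :: "'n \<Rightarrow> real^'n \<Rightarrow> real" where
  "hessian_term i x = w x * (\<zeta> x * \<zeta> x) * rho_radial_deriv (p x) (dgrad x i) * p x $ i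
     + w x * (\<zeta> x * \<zeta> x) * theta x * H x $ i $ i"

definition flux_partial :: "'n \<Rightarrow> real^'n \<Rightarrow> real" where
  "flux_partial i x = (if x \<in> U then main_term i x + cutoff_term i x + hessian_term i x else 0)"

lemma flux_outside_S: "x \<notin> S \<Longrightarrow> flux i x = 0"
  by (simp add: flux_def zero_outside_supp)

lemma flux_partial_outside_S: "x \<notin> S \<Longrightarrow> flux_partial i x = 0"
  by (simp add: flux_partial_def main_term_def cutoff_term_def hessian_term_def
      zero_outside_supp grad_eq_0_outside_supp)

lemma flux_has_partial: "\<exists>D. (flux i has_derivative D) (at x) \<and> D (axis i 1) = flux_partial i x"
proof (cases "x \<in> U")
  case True
  note d = frechet_derivative_works[THEN iffD1]
  note dw = d[OF w_differentiable[OF True]] and d\<zeta> = d[OF \<zeta>_differentiable]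
    and dp = d[OF grad_w_differentiable[OF True]]
  note D = has_derivative_mult[OF has_derivative_mult[OF
      has_derivative_mult[OF dw has_derivative_mult[OF d\<zeta> d\<zeta>]] theta_has_derivative[OF True]] dp]
  show ?thesis
    by (rule exI, rule conjI, rule has_derivative_transform_within_open[OF D open_U True])
       (use True in \<open>simp_all add: flux_def flux_partial_def main_term_def cutoff_term_def
         hessian_term_def grad_def dgrad_def hess_def algebra_simps\<close>)
next
  case False
  then have "x \<in> - S" using S_subset_U by auto
  then have "(flux i has_derivative (\<lambda>_. 0)) (at x)"
    using compact_S flux_outside_S
    by (intro has_derivative_0_if_vanishing_on_open[of "- S"]) (auto intro: compact_imp_closed)
  then show ?thesis using flux_partial_outside_S \<open>x \<in> - S\<close> by auto
qed

lemma abs_main_term_le: "\<bar>main_term i x\<bar> \<le> weight x (2 * s) * (\<zeta> x)\<^sup>2 * (norm (p x))\<^sup>2"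
proof -
  have "(p x $ i)\<^sup>2 \<le> (norm (p x))\<^sup>2"
    using component_le_norm_cart[of "p x" i] abs_le_square_iff by force
  then have "weight x (2 * s) * (\<zeta> x)\<^sup>2 * (p x $ i)\<^sup>2 \<le> weight x (2 * s) * (\<zeta> x)\<^sup>2 * (norm (p x))\<^sup>2"
    using weight_nonneg by (intro mult_left_mono) auto
  moreover have "main_term i x = weight x (2 * s) * (\<zeta> x)\<^sup>2 * (p x $ i)\<^sup>2"
    by (simp add: main_term_def theta_eq power2_eq_square)
  ultimately show ?thesis
    using weight_nonneg[of x "2 * s"] by simp
qed

lemma abs_cutoff_term_le:
  "\<bar>cutoff_term i x\<bar> \<le> 2 * \<bar>w x\<bar> * \<bar>\<zeta> x\<bar> * weight x (2 * s) * norm (grad \<zeta> x) * norm (p x)"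
proof -
  have "\<bar>cutoff_term i x\<bar> = 2 * \<bar>w x\<bar> * \<bar>\<zeta> x\<bar> * weight x (2 * s) * (\<bar>grad \<zeta> x $ i\<bar> * \<bar>p x $ i\<bar>)"
    using weight_nonneg[of x "2 * s"] by (simp add: cutoff_term_def theta_eq abs_mult)
  also have "\<dots> \<le> 2 * \<bar>w x\<bar> * \<bar>\<zeta> x\<bar> * weight x (2 * s) * (norm (grad \<zeta> x) * norm (p x))"
    using weight_nonneg[of x "2 * s"]
    by (intro mult_left_mono mult_mono component_le_norm_cart) auto
  finally show ?thesis by (simp add: mult.assoc)
qed

lemma abs_hessian_term_le:
  "\<bar>hessian_term i x\<bar> \<le> (2 * s + 1) * \<bar>w x\<bar> * (\<zeta> x)\<^sup>2 * weight x (2 * s) * norm (H x)"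
proof -
  let ?W = "weight x (2 * s)"
  have "\<bar>hessian_term i x\<bar> \<le> \<bar>w x * (\<zeta> x * \<zeta> x) * rho_radial_deriv (p x) (dgrad x i) * p x $ i\<bar>
      + \<bar>w x * (\<zeta> x * \<zeta> x) * theta x * H x $ i $ i\<bar>"
    unfolding hessian_term_def by (rule abs_triangle_ineq)
  also have "\<dots> = \<bar>w x\<bar> * (\<zeta> x)\<^sup>2 * \<bar>rho_radial_deriv (p x) (dgrad x i) * p x $ i\<bar>
      + \<bar>w x\<bar> * (\<zeta> x)\<^sup>2 * ?W * \<bar>H x $ i $ i\<bar>"
  proof -
    have "\<bar>w x * (\<zeta> x * \<zeta> x) * rho_radial_deriv (p x) (dgrad x i) * p x $ i\<bar>
        = \<bar>w x\<bar> * (\<zeta> x)\<^sup>2 * \<bar>rho_radial_deriv (p x) (dgrad x i) * p x $ i\<bar>"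
      by (simp add: abs_mult power2_eq_square)
    moreover have "\<bar>w x * (\<zeta> x * \<zeta> x) * theta x * H x $ i $ i\<bar> = \<bar>w x\<bar> * (\<zeta> x)\<^sup>2 * ?W * \<bar>H x $ i $ i\<bar>"
      using weight_nonneg[of x "2 * s"] by (simp add: theta_eq abs_mult power2_eq_square)
    ultimately show ?thesis by simp
  qed
  also have "\<dots> \<le> \<bar>w x\<bar> * (\<zeta> x)\<^sup>2 * (2 * s * ?W * norm (H x)) + \<bar>w x\<bar> * (\<zeta> x)\<^sup>2 * ?W * norm (H x)"
    using weight_nonneg[of x "2 * s"]
    by (intro add_mono mult_left_mono rho_radial_deriv_dgrad_le abs_diag_le_norm_cart) auto
  finally show ?thesis by (simp add: algebra_simps)
qed

lemma abs_flux_partial_le: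
  "\<bar>flux_partial i x\<bar> \<le> weight x (2 * s) * ((\<zeta> x)\<^sup>2 * (norm (p x))\<^sup>2
    + 2 * \<bar>w x\<bar> * \<bar>\<zeta> x\<bar> * norm (grad \<zeta> x) * norm (p x) + (2 * s + 1) * \<bar>w x\<bar> * (\<zeta> x)\<^sup>2 * norm (H x))"
proof -
  have "\<bar>flux_partial i x\<bar> \<le> \<bar>main_term i x\<bar> + \<bar>cutoff_term i x\<bar> + \<bar>hessian_term i x\<bar>"
    by (simp add: flux_partial_def abs_triangle_ineq4 order_trans[OF abs_triangle_ineq add_right_mono])
  also have "\<dots> \<le> weight x (2 * s) * (\<zeta> x)\<^sup>2 * (norm (p x))\<^sup>2
      + 2 * \<bar>w x\<bar> * \<bar>\<zeta> x\<bar> * weight x (2 * s) * norm (grad \<zeta> x) * norm (p x)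
      + (2 * s + 1) * \<bar>w x\<bar> * (\<zeta> x)\<^sup>2 * weight x (2 * s) * norm (H x)"
    by (intro add_mono abs_main_term_le abs_cutoff_term_le abs_hessian_term_le)
  finally show ?thesis by (simp add: algebra_simps)
qed


lemma flux_partial_bounded: "\<exists>B. \<forall>x. \<bar>flux_partial i x\<bar> \<le> B"
proof -
  define M where "M x = weight x (2 * s) * ((\<zeta> x)\<^sup>2 * (norm (p x))\<^sup>2
    + 2 * \<bar>w x\<bar> * \<bar>\<zeta> x\<bar> * norm (grad \<zeta> x) * norm (p x) + (2 * s + 1) * \<bar>w x\<bar> * (\<zeta> x)\<^sup>2 * norm (H x))"
    for x
  have "continuous_on U M"
    unfolding M_def using exponent_ge_1
    by (intro continuous_intros continuous_on_weight continuous_on_grad_w continuous_on_w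
        continuous_on_hess_w continuous_on_subset[OF continuous_on_\<zeta>]
        continuous_on_subset[OF continuous_on_grad_\<zeta>]) auto
  then obtain B where B: "\<And>x. x \<in> S \<Longrightarrow> norm (M x) \<le> B"
    using continuous_on_compact_bound[OF compact_S] continuous_on_subset[OF _ S_subset_U] by metis
  have "\<bar>flux_partial i x\<bar> \<le> max B 0" for x
  proof (cases "x \<in> S")
    case True
    then have "\<bar>flux_partial i x\<bar> \<le> M x"
      using abs_flux_partial_le S_subset_U by (auto simp: M_def)
    also have "\<dots> \<le> B"
      using B[OF True] by simp
    finally show ?thesis by simp
  qed (simp add: flux_partial_outside_S)
  then show ?thesis by blast
qed

lemma integral_flux_partial:
  "integrable lborel (flux_partial i)" "(\<integral>x. flux_partial i x \<partial>lborel) = 0"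
proof -
  obtain D where D: "\<And>x. (flux i has_derivative D x) (at x)" "\<And>x. D x (axis i 1) = flux_partial i x"
    using flux_has_partial by metis
  obtain B where B: "\<And>x. \<bar>D x (axis i 1)\<bar> \<le> B"
    using flux_partial_bounded D(2) by metis
  show "integrable lborel (flux_partial i)" "(\<integral>x. flux_partial i x \<partial>lborel) = 0"
    using integral_directional_derivative_eq_0[OF D(1) compact_S flux_outside_S B] D(2) by simp_all
qed

definition lhs_integrand :: "real^'n \<Rightarrow> real" where
  "lhs_integrand x = weight x (2 * s + 2) * (\<zeta> x)\<^sup>2"

definition hess_integrand :: "real^'n \<Rightarrow> real" where
  "hess_integrand x = weight x (2 * s - 2) * (norm (H x))\<^sup>2 * (\<zeta> x)\<^sup>2"

definition cutoff_integrand :: "real^'n \<Rightarrow> real" where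
  "cutoff_integrand x = weight x (2 * s) * (norm (grad \<zeta> x))\<^sup>2"

lemma sum_main_term: "(\<Sum>i\<in>UNIV. main_term i x) = lhs_integrand x"
proof -
  have "(\<Sum>i\<in>UNIV. main_term i x) = (\<zeta> x)\<^sup>2 * (weight x (2 * s) * (\<Sum>i\<in>UNIV. p x $ i * p x $ i))"
    by (simp add: main_term_def theta_eq sum_distrib_left power2_eq_square algebra_simps)
  also have "(\<Sum>i\<in>UNIV. p x $ i * p x $ i) = (norm (p x))\<^sup>2"
    by (simp add: power2_norm_eq_inner inner_vec_def)
  also have "weight x (2 * s) * (norm (p x))\<^sup>2 = weight x (2 * s + 2)"
    using pw_add_2[of "norm (p x)" "2 * s"] exponent_ge_1 by (simp add: weight_def)
  finally show ?thesis
    by (simp add: lhs_integrand_def mult.commute)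
qed

lemma abs_sum_cutoff_term_le:
  "\<bar>\<Sum>i\<in>UNIV. cutoff_term i x\<bar> \<le> 2 * \<bar>w x\<bar> * \<bar>\<zeta> x\<bar> * weight x (2 * s) * norm (grad \<zeta> x) * norm (p x)"
proof -
  have "(\<Sum>i\<in>UNIV. cutoff_term i x) = 2 * w x * \<zeta> x * weight x (2 * s) * inner (grad \<zeta> x) (p x)"
    by (simp add: cutoff_term_def theta_eq inner_vec_def sum_distrib_left algebra_simps)
  then have "\<bar>\<Sum>i\<in>UNIV. cutoff_term i x\<bar>
      = 2 * \<bar>w x\<bar> * \<bar>\<zeta> x\<bar> * weight x (2 * s) * \<bar>inner (grad \<zeta> x) (p x)\<bar>"
    using weight_nonneg[of x "2 * s"] by (simp add: abs_mult)
  also have "\<dots> \<le> 2 * \<bar>w x\<bar> * \<bar>\<zeta> x\<bar> * weight x (2 * s) * (norm (grad \<zeta> x) * norm (p x))"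
    using weight_nonneg[of x "2 * s"] by (intro mult_left_mono Cauchy_Schwarz_ineq2) auto
  finally show ?thesis by (simp add: mult.assoc)
qed

lemma divergence_remainder_le:
  assumes "x \<in> U"
  shows "\<bar>(\<Sum>i\<in>UNIV. flux_partial i x) - lhs_integrand x\<bar>
    \<le> 2 * \<bar>w x\<bar> * \<bar>\<zeta> x\<bar> * weight x (2 * s) * norm (grad \<zeta> x) * norm (p x)
      + \<bar>w x\<bar> * (\<zeta> x)\<^sup>2 * (real CARD('n) * (2 * s + 1)) * weight x (2 * s) * norm (H x)"
proof -
  have "(\<Sum>i\<in>UNIV. flux_partial i x) - lhs_integrand x
      = (\<Sum>i\<in>UNIV. cutoff_term i x) + (\<Sum>i\<in>UNIV. hessian_term i x)"
    using assms by (simp add: flux_partial_def sum.distrib sum_main_term)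
  moreover have "\<bar>\<Sum>i\<in>UNIV. hessian_term i x\<bar>
      \<le> (\<Sum>i\<in>(UNIV::'n set). (2 * s + 1) * \<bar>w x\<bar> * (\<zeta> x)\<^sup>2 * weight x (2 * s) * norm (H x))"
    by (rule order_trans[OF sum_abs sum_mono]) (rule abs_hessian_term_le)
  ultimately show ?thesis
    using abs_sum_cutoff_term_le[of x] by (simp add: algebra_simps) linarith
qed


lemma divergence_estimate:
  assumes "x \<in> U" and "x \<in> S \<Longrightarrow> \<bar>w x\<bar> \<le> M"
  shows "\<bar>(\<Sum>i\<in>UNIV. flux_partial i x) - lhs_integrand x\<bar> \<le> lhs_integrand x / 2
    + M\<^sup>2 * ((real CARD('n) * (2 * s + 1))\<^sup>2 * hess_integrand x + 4 * cutoff_integrand x)"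
proof (cases "x \<in> S")
  case False
  then show ?thesis
    by (simp add: flux_partial_outside_S lhs_integrand_def hess_integrand_def cutoff_integrand_def
        zero_outside_supp grad_eq_0_outside_supp)
next
  case True
  let ?r = "norm (p x)"
  have "\<bar>(\<Sum>i\<in>UNIV. flux_partial i x) - lhs_integrand x\<bar>
    \<le> K ?r * pw ?r (2 * s + 2) * (\<zeta> x)\<^sup>2 / 2 + M\<^sup>2 * ((real CARD('n) * (2 * s + 1))\<^sup>2
      * (K ?r * pw ?r (2 * s - 2) * (norm (H x))\<^sup>2 * (\<zeta> x)\<^sup>2) + 4 * (K ?r * pw ?r (2 * s) * (norm (grad \<zeta> x))\<^sup>2))"
  proof (rule young_absorb)
    show "\<bar>w x\<bar> \<le> M" using assms(2) True .
    show "pw ?r (2 * s) = pw ?r (2 * s - 2) * ?r\<^sup>2"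
      using pw_add_2[of ?r "2 * s - 2"] exponent_ge_1 by simp
    show "pw ?r (2 * s + 2) = pw ?r (2 * s) * ?r\<^sup>2"
      using pw_add_2[of ?r "2 * s"] exponent_ge_1 by simp
    show "\<bar>(\<Sum>i\<in>UNIV. flux_partial i x) - lhs_integrand x\<bar>
      \<le> 2 * \<bar>w x\<bar> * \<bar>\<zeta> x\<bar> * (K ?r * pw ?r (2 * s)) * norm (grad \<zeta> x) * ?r
        + \<bar>w x\<bar> * (\<zeta> x)\<^sup>2 * (real CARD('n) * (2 * s + 1)) * (K ?r * pw ?r (2 * s)) * norm (H x)"
      using divergence_remainder_le[OF assms(1)] by (simp add: weight_def)
  qed (use K_pos exponent_ge_1 in \<open>auto simp: less_imp_le pw_nonneg\<close>)
  then show ?thesis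
    by (simp add: lhs_integrand_def hess_integrand_def cutoff_integrand_def weight_def mult.assoc)
qed

lemma integrands_outside_S:
  "x \<notin> S \<Longrightarrow> lhs_integrand x = 0 \<and> hess_integrand x = 0 \<and> cutoff_integrand x = 0"
  by (simp add: lhs_integrand_def hess_integrand_def cutoff_integrand_def
      zero_outside_supp grad_eq_0_outside_supp)

lemma integrands_nonneg: "lhs_integrand x \<ge> 0 \<and> hess_integrand x \<ge> 0 \<and> cutoff_integrand x \<ge> 0"
  using weight_nonneg by (simp add: lhs_integrand_def hess_integrand_def cutoff_integrand_def)

lemma continuous_on_integrands:
  "continuous_on U lhs_integrand" "continuous_on U hess_integrand" "continuous_on U cutoff_integrand"
  unfolding lhs_integrand_def hess_integrand_def cutoff_integrand_def using exponent_ge_1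
  by (auto intro!: continuous_intros continuous_on_weight continuous_on_hess_w
      continuous_on_subset[OF continuous_on_\<zeta>] continuous_on_subset[OF continuous_on_grad_\<zeta>])

lemma integrable_integrands:
  "integrable lborel (\<lambda>x. indicator U x * lhs_integrand x)"
  "integrable lborel (\<lambda>x. indicator U x * hess_integrand x)"
  "integrable lborel (\<lambda>x. indicator U x * cutoff_integrand x)"
  using compact_S S_subset_U continuous_on_integrands integrands_outside_S
  by (auto intro!: integrable_indicator_mult_continuous_on)

lemma sq_le_Sup_sq_on_S: assumes "x \<in> S" shows "\<bar>w x\<bar>\<^sup>2 \<le> Sup ((\<lambda>x. \<bar>w x\<bar>\<^sup>2) ` S)"
proof -
  have "compact ((\<lambda>x. \<bar>w x\<bar>\<^sup>2) ` S)"
    using compact_S continuous_on_subset[OF continuous_on_w S_subset_U]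
    by (intro compact_continuous_image continuous_intros)
  then show ?thesis
    using assms by (intro cSup_upper bounded_imp_bdd_above compact_imp_bounded) auto
qed

lemma integral_lhs_le:
  assumes "Sm \<ge> 0" and "\<And>x. x \<in> S \<Longrightarrow> \<bar>w x\<bar>\<^sup>2 \<le> Sm"
  shows "(\<integral>x. indicator U x * lhs_integrand x \<partial>lborel)
    \<le> 2 * Sm * ((real CARD('n) * (2 * s + 1))\<^sup>2 * (\<integral>x. indicator U x * hess_integrand x \<partial>lborel)
      + 4 * (\<integral>x. indicator U x * cutoff_integrand x \<partial>lborel))"
proof -
  define M where "M = sqrt Sm"
  have M: "M\<^sup>2 = Sm" "\<And>x. x \<in> S \<Longrightarrow> \<bar>w x\<bar> \<le> M"
    using assms by (auto simp: M_def real_le_rsqrt)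
  have "(\<integral>x. indicator U x * lhs_integrand x \<partial>lborel) \<le> 2 * (\<integral>x. Sm * ((real CARD('n) * (2 * s + 1))\<^sup>2
      * (indicator U x * hess_integrand x) + 4 * (indicator U x * cutoff_integrand x)) \<partial>lborel)"
  proof (rule integral_le_by_absorption)
    show "integrable lborel (\<lambda>x. \<Sum>i\<in>UNIV. flux_partial i x)"
      "(\<integral>x. (\<Sum>i\<in>UNIV. flux_partial i x) \<partial>lborel) = 0"
      using integral_flux_partial by simp_all
    fix x
    show "\<bar>(\<Sum>i\<in>UNIV. flux_partial i x) - indicator U x * lhs_integrand x\<bar>
      \<le> indicator U x * lhs_integrand x / 2 + Sm * ((real CARD('n) * (2 * s + 1))\<^sup>2
        * (indicator U x * hess_integrand x) + 4 * (indicator U x * cutoff_integrand x))"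
      using divergence_estimate[of x M] M by (cases "x \<in> U") (auto simp: flux_partial_def)
  qed (use integrable_integrands in auto)
  then show ?thesis
    using integrable_integrands by (simp add: mult.assoc)
qed

lemma set_integral_lhs_le:
  "(LINT x:U|lebesgue. lhs_integrand x) \<le> (2 * (real CARD('n) * (2 * s + 1))\<^sup>2 + 8)
     * Sup ((\<lambda>x. \<bar>w x\<bar>\<^sup>2) ` S)
     * ((LINT x:U|lebesgue. hess_integrand x) + (LINT x:U|lebesgue. cutoff_integrand x))"
proof -
  define c where "c = real CARD('n) * (2 * s + 1)"
  define Sm where "Sm = Sup ((\<lambda>x. \<bar>w x\<bar>\<^sup>2) ` S)"
  define IA where "IA = (\<integral>x. indicator U x * hess_integrand x \<partial>lborel)"
  define IB where "IB = (\<integral>x. indicator U x * cutoff_integrand x \<partial>lborel)"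
  have "IA \<ge> 0" "IB \<ge> 0"
    unfolding IA_def IB_def using integrands_nonneg by (auto intro!: integral_nonneg)
  show ?thesis
  proof (cases "S = {}")
    case True
    \<comment> \<open>Both sides vanish, whatever the unspecified value of \<open>Sup {}\<close> is.\<close>
    then show ?thesis
      using integrands_outside_S by (simp add: set_lebesgue_integral_def)
  next
    case False
    then have "Sm \<ge> 0"
      unfolding Sm_def using sq_le_Sup_sq_on_S by (meson ex_in_conv order_trans zero_le_power2)
    then have "(\<integral>x. indicator U x * lhs_integrand x \<partial>lborel) \<le> 2 * Sm * (c\<^sup>2 * IA + 4 * IB)"
      unfolding Sm_def IA_def IB_def c_def using sq_le_Sup_sq_on_S by (rule integral_lhs_le)
    also have "\<dots> \<le> (2 * c\<^sup>2 + 8) * Sm * (IA + IB)"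
      using \<open>Sm \<ge> 0\<close> \<open>IA \<ge> 0\<close> \<open>IB \<ge> 0\<close> by (simp add: algebra_simps)
    finally show ?thesis
      by (simp add: set_integral_lebesgue_eq_lborel[OF open_U] continuous_on_integrands
          c_def Sm_def IA_def IB_def)
  qed
qed

lemma interpolation_inequality:
  "(LINT x:U|lebesgue. K (norm (grad w x)) * pw (norm (grad w x)) (2 * s+2) * (\<zeta> x)\<^sup>2)
     \<le> (2 * (real CARD('n) * (2 * s + 1))\<^sup>2 + 8) * Sup ((\<lambda>x. \<bar>w x\<bar>\<^sup>2) ` supp \<zeta>) *
       ((LINT x:U|lebesgue. K (norm (grad w x)) * pw (norm (grad w x)) (2 * s-2)
            * (norm (hess w x))\<^sup>2 * (\<zeta> x)\<^sup>2)
      + (LINT x:U|lebesgue. K (norm (grad w x)) * pw (norm (grad w x)) (2 * s)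
            * (norm (grad \<zeta> x))\<^sup>2))"
  using set_integral_lhs_le
  by (simp add: lhs_integrand_def hess_integrand_def cutoff_integrand_def weight_def)

end

theorem lemma3p8:
  fixes U :: "(real^'n) set" and N :: nat and a \<alpha> :: "nat \<Rightarrow> real" and s :: real
  assumes "CARD('n) \<ge> 2" and "bounded U" and "open U"
    and "N \<ge> 1" and "\<alpha> 0 = 0" and "\<forall>j<N. \<alpha> j < \<alpha> (Suc j)"
    and "a 0 > 0" and "a N > 0" and "\<forall>j\<le>N. a j \<ge> 0"
    and "s \<ge> 1"
  shows "\<exists>C>0. \<forall>\<zeta> w. test_fun U \<zeta> \<and> Ck_on 2 U w \<longrightarrow>
     (LINT x:U|lebesgue. Kfun N a \<alpha> (norm (grad w x)) * pw (norm (grad w x)) (2 * s+2) * (\<zeta> x)\<^sup>2)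
     \<le> C * Sup ((\<lambda>x. \<bar>w x\<bar>\<^sup>2) ` supp \<zeta>) *
       ((LINT x:U|lebesgue. Kfun N a \<alpha> (norm (grad w x)) * pw (norm (grad w x)) (2 * s-2)
            * (norm (hess w x))\<^sup>2 * (\<zeta> x)\<^sup>2)
      + (LINT x:U|lebesgue. Kfun N a \<alpha> (norm (grad w x)) * pw (norm (grad w x)) (2 * s)
            * (norm (grad \<zeta> x))\<^sup>2))"
proof -
  have setting: "interpolation_setting N a \<alpha> s U \<zeta> w" if "test_fun U \<zeta> \<and> Ck_on 2 U w" for \<zeta> w
    using assms that by unfold_locales auto
  show ?thesis
    using interpolation_setting.interpolation_inequality[OF setting]
    by (intro exI[of _ "2 * (real CARD('n) * (2 * s + 1))\<^sup>2 + 8"]) (auto intro: add_nonneg_pos)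
qed

end
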